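(* Consider the PSSG described in the context in the FULL-FULL scenario: $k_1\mu_1>2L\lambda$ and $k_2\mu_2>2L\lambda$. Define $$\theta^L_1=-\frac{k_q(q_1(L+x_2)-q_2(L-x_2))+k_l(x_2-x_1)}{k_p d},\quad \theta^R_1=\frac{k_q(q_2(L-x_1)-q_1(x_1+L))+k_l(x_2-x_1)}{k_p d},$$ $$\theta^L_2=-\frac{k_q q_1(2L)+k_l(x_2-x_1)}{k_p d},\quad \theta^R_2=\frac{k_q q_2(2L)+k_l(x_2-x_1)}{k_p d}.$$ (1) If $p_1-p_2\in[\theta^R_1,\theta^R_2)$, then the Nash equilibrium of the PSSG is: every PEV at $x\in[x_1,L]$ selects station 2 with probability 1, and every PEV at $x\in[-L,x_1)$ selects station 1 with probability $\omega_1$ and station 2 with probability $1-\omega_1$, where $\omega_1$ is the unique root in $[0,1]$ of $$k_q\Big(q_1\big((x_1+L)\omega_1\big)-q_2\big(L-x_1+(x_1+L)(1-\omega_1)\big)\Big)+k_pd(p_1-p_2)+k_l(x_1-x_2)=0.$$ (2) If $p_1-p_2\in(\theta^L_2,\theta^L_1]$, then the Nash equilibrium of the PSSG is: every PEV at $x\in[-L,x_2]$ selects station 1 with probability 1, and every PEV at $x\in(x_2,L]$ selects station 1 with probability $\omega_1$ and station 2 with probability $1-\omega_1$, where $\omega_1$ is the unique root in $[0,1]$ of $$k_q\Big(q_2\big((L-x_2)(1-\omega_1)\big)-q_1\big(x_2+L+(L-x_2)\omega_1\big)\Big)+k_pd(p_2-p_1)+k_l(x_1-x_2)=0.$$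
   Context: The system is the segment $[-L,L]$ ($L>0$) with two charging stations located at $x_1<x_2$, $-L<x_1<x_2<L$. Station $i\in\{1,2\}$ has $k_i\ge 1$ (integer) identical charging ports, PEV service times with mean $1/\mu_i$ ($\mu_i>0$) and variance $\sigma_i^2$, and announces a price $p_i\in[p_{\min},p_{\max}]$. A continuum of PEVs is uniformly distributed on $[-L,L]$, generating charging requests at rate $\lambda>0$ per unit length. Each PEV at location $x$ selects station 1 or 2, possibly at random; a strategy profile is described by the probability $\omega(x)\in[0,1]$ that the PEV at $x$ selects station 1. Let $a_1=\int_{-L}^{L}\omega(x)\,dx$ and $a_2=2L-a_1$. For $0\le a<k_i\mu_i/\lambda$, $$q_i(a)=\frac{a\lambda\,(\sigma_i^2+\frac{1}{\mu_i^2})\,\rho^{k_i-1}}{2(k_i-1)!\,(k_i-\rho)^2\Big[\sum_{m=0}^{k_i-1}\frac{\rho^m}{m!}+\frac{\rho^{k_i}}{(k_i-1)!(k_i-\rho)}\Big]},\qquad \rho=\frac{a\lambda}{\mu_i},$$ is the mean waiting time at station $i$, and $q_i(a)=+\infty$ if $a\ge k_i\mu_i/\lambda$. Given $a_1,a_2$ (which a single PEV cannot change), a PEV at $x$ selecting station $i$ gets payoff $U(i;x)=-k_l|x-x_i|-k_q\,q_i(a_i)-k_p\,d\,p_i$, with constants $k_l,k_q,k_p,d>0$; a randomized choice yields the expected payoff. A Nash equilibrium of the PSSG is a profile in which every PEV's (possibly mixed) choice maximizes its expected payoff given $a_1,a_2$. *)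

theory Defs
  imports "HOL-Analysis.Analysis" "HOL-Library.Extended_Real"
begin

text \<open>Mean waiting time formula (M/G/k approximation) at a station with k ports,
  service rate mu, service-time variance sigma2, request rate lam per unit length,
  and served length a (so the arrival rate is a*lam). Meaningful for
  0 <= a < k*mu/lam.\<close>
definition waitq :: "nat \<Rightarrow> real \<Rightarrow> real \<Rightarrow> real \<Rightarrow> real \<Rightarrow> real" where
  "waitq k mu sigma2 lam a =
     (let rho = a * lam / mu in
      a * lam * (sigma2 + 1 / mu ^ 2) * rho ^ (k - 1) /
      (2 * fact (k - 1) * (real k - rho) ^ 2 *
        ((\<Sum>m<k. rho ^ m / fact m) + rho ^ k / (fact (k - 1) * (real k - rho)))))"

definition waitq_ext :: "nat \<Rightarrow> real \<Rightarrow> real \<Rightarrow> real \<Rightarrow> real \<Rightarrow> ereal" where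
  "waitq_ext k mu sigma2 lam a =
     (if a \<ge> real k * mu / lam then PInfty else ereal (waitq k mu sigma2 lam a))"

definition payoff :: "real \<Rightarrow> real \<Rightarrow> real \<Rightarrow> real \<Rightarrow> real \<Rightarrow> ereal \<Rightarrow> real \<Rightarrow> real \<Rightarrow> ereal" where
  "payoff kl kq kp d xi qi pr x = - ereal (kl * \<bar>x - xi\<bar>) - ereal kq * qi - ereal (kp * d * pr)"

text \<open>A strategy profile: omega x = probability that the PEV at x selects station 1.\<close>
definition is_profile :: "real \<Rightarrow> (real \<Rightarrow> real) \<Rightarrow> bool" where
  "is_profile L \<omega> \<longleftrightarrow> \<omega> integrable_on {-L..L} \<and> (\<forall>x\<in>{-L..L}. 0 \<le> \<omega> x \<and> \<omega> x \<le> 1)"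

definition is_NE ::
  "real \<Rightarrow> real \<Rightarrow> real \<Rightarrow> real \<Rightarrow> real \<Rightarrow> real \<Rightarrow>
   real \<Rightarrow> nat \<Rightarrow> real \<Rightarrow> real \<Rightarrow> real \<Rightarrow>
   real \<Rightarrow> nat \<Rightarrow> real \<Rightarrow> real \<Rightarrow> real \<Rightarrow> (real \<Rightarrow> real) \<Rightarrow> bool" where
  "is_NE L lam kl kq kp d x1 k1 mu1 s1 p1 x2 k2 mu2 s2 p2 \<omega> \<longleftrightarrow>
     is_profile L \<omega> \<and>
     (let a1 = integral {-L..L} \<omega>; a2 = 2 * L - a1;
          U1 = payoff kl kq kp d x1 (waitq_ext k1 mu1 s1 lam a1) p1;
          U2 = payoff kl kq kp d x2 (waitq_ext k2 mu2 s2 lam a2) p2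
      in \<forall>x\<in>{-L..L}.
           ereal (\<omega> x) * U1 x + ereal (1 - \<omega> x) * U2 x \<ge> max (U1 x) (U2 x))"

end

theory Submission
  imports Defs
begin

text \<open>In the full-full scenario both mean waiting times are finite, continuous and strictly
increasing on the loads \<open>[0, 2L]\<close>, so the cost gap
\<open>\<Delta>(a) = k\<^sub>q (q\<^sub>1(a) - q\<^sub>2(2L - a)) + k\<^sub>p d (p\<^sub>1 - p\<^sub>2)\<close> of station 1 is strictly increasing.
Given the load \<open>a\<^sub>1\<close>, a PEV at \<open>x\<close> prefers station 1 exactly when its travel gain
\<open>k\<^sub>l (|x - x\<^sub>2| - |x - x\<^sub>1|)\<close> exceeds \<open>\<Delta>(a\<^sub>1)\<close>; the gain equals \<open>k\<^sub>l (x\<^sub>2 - x\<^sub>1)\<close> on \<open>[-L, x\<^sub>1]\<close>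
and is smaller to the right of \<open>x\<^sub>1\<close>. In the right regime the price condition says
\<open>\<Delta>(0) < k\<^sub>l (x\<^sub>2 - x\<^sub>1) \<le> \<Delta>(x\<^sub>1 + L)\<close>, so the intermediate value theorem yields a unique load
\<open>a\<^sub>1 \<le> x\<^sub>1 + L\<close> with \<open>\<Delta>(a\<^sub>1) = k\<^sub>l (x\<^sub>2 - x\<^sub>1)\<close>, realised by mixing on \<open>[-L, x\<^sub>1)\<close>. Any equilibrium
has this load: a smaller one would make all PEVs left of \<open>x\<^sub>1\<close> choose station 1, a larger one would
drive every PEV to station 2. The left regime is the right regime of the mirrored game
(\<open>x \<mapsto> -x\<close>, stations swapped, \<open>\<omega> \<mapsto> 1 - \<omega>(-x)\<close>).\<close>

section \<open>Mean waiting time\<close>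

definition wait_factor :: "nat \<Rightarrow> real \<Rightarrow> real" where
  "wait_factor k r =
     r ^ k / ((real k - r)\<^sup>2 * (\<Sum>m<k. r ^ m / fact m) + r ^ k * (real k - r) / fact (k - 1))"

lemma wait_factor_denom_pos:
  assumes "k \<ge> 1" "0 \<le> r" "r < real k"
  shows "0 < (real k - r)\<^sup>2 * (\<Sum>m<k. r ^ m / fact m) + r ^ k * (real k - r) / fact (k - 1)"
proof -
  have "(\<lambda>m. r ^ m / fact m) 0 \<le> (\<Sum>m<k. r ^ m / fact m)"
    using assms by (intro member_le_sum) auto
  then have "0 < (real k - r)\<^sup>2 * (\<Sum>m<k. r ^ m / fact m)"
    using assms by (intro mult_pos_pos) auto
  moreover have "0 \<le> r ^ k * (real k - r) / fact (k - 1)"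
    using assms by auto
  ultimately show ?thesis by linarith
qed

lemma wait_factor_strict_mono_on:
  assumes "k \<ge> 1"
  shows "strict_mono_on {0..<real k} (wait_factor k)"
proof (rule strict_mono_onI)
  fix r t assume "r \<in> {0..<real k}" "t \<in> {0..<real k}" "r < t"
  then have r: "0 \<le> r" "r < t" "t < real k" by auto
  define S where "S = (\<lambda>u::real. \<Sum>m<k. u ^ m / fact m)"
  define D where "D = (\<lambda>u::real. (real k - u)\<^sup>2 * S u + u ^ k * (real k - u) / fact (k - 1))"
  have D: "D r > 0" "D t > 0"
    using wait_factor_denom_pos[OF assms] r unfolding D_def S_def by auto
  have wf: "wait_factor k u = u ^ k / D u" for u
    unfolding wait_factor_def D_def S_def ..
  show "wait_factor k r < wait_factor k t"
  proof (cases "r = 0")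
    case True
    then show ?thesis using D r assms by (simp add: wf power_0_left)
  next
    case False
    with r have "r > 0" by simp
    have S_cross: "r ^ k * S t \<le> t ^ k * S r"
      unfolding S_def sum_distrib_left
    proof (rule sum_mono)
      fix m assume "m \<in> {..<k}"
      then have mk: "k = m + (k - m)" by simp
      have "r ^ k * t ^ m = (r ^ m * t ^ m) * r ^ (k - m)"
        by (subst mk) (simp add: power_add mult_ac)
      also have "\<dots> \<le> (r ^ m * t ^ m) * t ^ (k - m)"
        using r by (intro mult_left_mono power_mono) auto
      also have "\<dots> = t ^ k * r ^ m"
        by (subst (2) mk) (simp add: power_add mult_ac)
      finally show "r ^ k * (t ^ m / fact m) \<le> t ^ k * (r ^ m / fact m)"
        by (simp add: divide_right_mono)
    qed
    have "r ^ k * ((real k - t)\<^sup>2 * S t) \<le> t ^ k * ((real k - r)\<^sup>2 * S r)"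
    proof -
      have sq: "(real k - t)\<^sup>2 \<le> (real k - r)\<^sup>2"
        using r by (intro power_mono) auto
      have nonneg: "0 \<le> r ^ k * S t"
        using r unfolding S_def by (intro mult_nonneg_nonneg sum_nonneg) auto
      have "(real k - t)\<^sup>2 * (r ^ k * S t) \<le> (real k - r)\<^sup>2 * (t ^ k * S r)"
        by (rule mult_mono[OF sq S_cross _ nonneg]) simp
      then show ?thesis by (simp add: mult_ac)
    qed
    moreover have "r ^ k * (t ^ k * (real k - t) / fact (k - 1)) < t ^ k * (r ^ k * (real k - r) / fact (k - 1))"
    proof -
      have "(r ^ k * t ^ k / fact (k - 1)) * (real k - t) < (r ^ k * t ^ k / fact (k - 1)) * (real k - r)"
        using r \<open>r > 0\<close> by (intro mult_strict_left_mono) auto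
      then show ?thesis by (simp add: field_simps)
    qed
    ultimately have "r ^ k * D t < t ^ k * D r"
      unfolding D_def by (simp add: distrib_left)
    then show ?thesis
      unfolding wf using D by (simp add: field_simps)
  qed
qed

lemma load_below_capacity:
  assumes "mu > 0" "lam > 0" "a < real k * mu / lam"
  shows "a * lam / mu < real k"
  using assms by (simp add: field_simps)

lemma waitq_eq_wait_factor:
  assumes "k \<ge> 1" "mu > 0" "lam > 0" "a \<in> {0..<real k * mu / lam}"
  shows "waitq k mu s lam a = mu * (s + 1 / mu\<^sup>2) / (2 * fact (k - 1)) * wait_factor k (a * lam / mu)"
proof -
  define r where "r = a * lam / mu"
  define S where "S = (\<Sum>m<k. r ^ m / fact m)"
  have "a * lam = mu * r" "real k - r \<noteq> 0"
    using assms load_below_capacity[of mu lam a k] unfolding r_def by auto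
  have num: "mu * r * (s + 1 / mu\<^sup>2) * r ^ (k - 1) = mu * (s + 1 / mu\<^sup>2) * r ^ k"
    using assms(1) by (simp add: power_eq_if[of r k])
  have den: "2 * fact (k - 1) * (real k - r)\<^sup>2 * (S + r ^ k / (fact (k - 1) * (real k - r)))
      = 2 * fact (k - 1) * ((real k - r)\<^sup>2 * S + r ^ k * (real k - r) / fact (k - 1))"
    using \<open>real k - r \<noteq> 0\<close> by (simp add: field_simps power2_eq_square)
  have "waitq k mu s lam a = mu * r * (s + 1 / mu\<^sup>2) * r ^ (k - 1) /
      (2 * fact (k - 1) * (real k - r)\<^sup>2 * (S + r ^ k / (fact (k - 1) * (real k - r))))"
    unfolding waitq_def Let_def r_def[symmetric] S_def by (simp add: \<open>a * lam = mu * r\<close>)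
  also have "\<dots> = mu * (s + 1 / mu\<^sup>2) / (2 * fact (k - 1)) *
      (r ^ k / ((real k - r)\<^sup>2 * S + r ^ k * (real k - r) / fact (k - 1)))"
    unfolding num den by simp
  finally show ?thesis
    unfolding wait_factor_def r_def[symmetric] S_def .
qed

lemma waitq_strict_mono_on:
  assumes "k \<ge> 1" "mu > 0" "lam > 0" "s \<ge> 0"
  shows "strict_mono_on {0..<real k * mu / lam} (waitq k mu s lam)"
proof (rule strict_mono_onI)
  fix a b assume ab: "a \<in> {0..<real k * mu / lam}" "b \<in> {0..<real k * mu / lam}" "a < b"
  have "wait_factor k (a * lam / mu) < wait_factor k (b * lam / mu)"
    using ab assms load_below_capacity[OF assms(2,3)]
    by (intro strict_mono_onD[OF wait_factor_strict_mono_on[OF assms(1)]])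
       (auto intro!: divide_strict_right_mono)
  moreover have "0 < mu * (s + 1 / mu\<^sup>2) / (2 * fact (k - 1))"
    using assms by (intro divide_pos_pos mult_pos_pos add_nonneg_pos) auto
  ultimately show "waitq k mu s lam a < waitq k mu s lam b"
    unfolding waitq_eq_wait_factor[OF assms(1-3) ab(1)] waitq_eq_wait_factor[OF assms(1-3) ab(2)]
    by (rule mult_strict_left_mono)
qed

lemma continuous_on_waitq:
  assumes "k \<ge> 1" "mu > 0" "lam > 0"
  shows "continuous_on {0..<real k * mu / lam} (waitq k mu s lam)"
proof -
  let ?c = "mu * (s + 1 / mu\<^sup>2) / (2 * fact (k - 1))"
  have "(real k - a * lam / mu)\<^sup>2 * (\<Sum>m<k. (a * lam / mu) ^ m / fact m)
      + (a * lam / mu) ^ k * (real k - a * lam / mu) / fact (k - 1) \<noteq> 0"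
    if "a \<in> {0..<real k * mu / lam}" for a
    using that assms load_below_capacity[OF assms(2,3)]
    by (intro wait_factor_denom_pos[THEN less_imp_neq, symmetric]) auto
  then have "continuous_on {0..<real k * mu / lam} (\<lambda>a. ?c * wait_factor k (a * lam / mu))"
    unfolding wait_factor_def using assms by (intro continuous_intros) auto
  then show ?thesis
    by (rule continuous_on_eq) (simp add: waitq_eq_wait_factor[OF assms])
qed

lemma waitq_zero: "waitq k mu s lam 0 = 0"
  unfolding waitq_def by simp

lemma interval_below_capacity:
  assumes "lam > 0" "2 * L * lam < real k * mu"
  shows "{0..2 * L} \<subseteq> {0..<real k * mu / lam}"
proof
  fix a assume a: "a \<in> {0..2 * L}"
  then have "a * lam \<le> 2 * L * lam"
    using assms(1) by (intro mult_right_mono) auto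
  then have "a * lam < real k * mu"
    using assms(2) by linarith
  with a assms(1) show "a \<in> {0..<real k * mu / lam}"
    by (simp add: pos_less_divide_eq)
qed

lemma waitq_ext_below_capacity:
  assumes "a < real k * mu / lam"
  shows "waitq_ext k mu s lam a = ereal (waitq k mu s lam a)"
  using assms unfolding waitq_ext_def by simp

section \<open>Best responses and strategy profiles\<close>

lemma mixture_ge_max_iff:
  assumes "0 \<le> w" "w \<le> 1"
  shows "max (ereal u1) (ereal u2) \<le> ereal w * ereal u1 + ereal (1 - w) * ereal u2 \<longleftrightarrow>
         (u2 < u1 \<longrightarrow> w = 1) \<and> (u1 < u2 \<longrightarrow> w = 0)"
proof -
  have "max (ereal u1) (ereal u2) \<le> ereal w * ereal u1 + ereal (1 - w) * ereal u2 \<longleftrightarrow>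
        max u1 u2 \<le> w * u1 + (1 - w) * u2"
    by simp
  also have "\<dots> \<longleftrightarrow> (u2 < u1 \<longrightarrow> w = 1) \<and> (u1 < u2 \<longrightarrow> w = 0)"
  proof (cases u1 u2 rule: linorder_cases)
    case less
    then have "max u1 u2 \<le> w * u1 + (1 - w) * u2 \<longleftrightarrow> w * (u2 - u1) \<le> 0"
      by (simp add: max_def algebra_simps)
    also have "\<dots> \<longleftrightarrow> w = 0"
      using less assms by (auto simp: mult_le_0_iff)
    finally show ?thesis using less by simp
  next
    case greater
    then have "max u1 u2 \<le> w * u1 + (1 - w) * u2 \<longleftrightarrow> (1 - w) * (u1 - u2) \<le> 0"
      by (simp add: max_def algebra_simps)
    also have "\<dots> \<longleftrightarrow> w = 1"
      using greater assms by (auto simp: mult_le_0_iff)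
    finally show ?thesis using greater by simp
  qed (simp add: max_def algebra_simps)
  finally show ?thesis .
qed

lemma payoff_ereal:
  "payoff kl kq kp d xi (ereal q) pr x = ereal (- (kl * \<bar>x - xi\<bar>) - kq * q - kp * d * pr)"
  unfolding payoff_def by simp

lemma profile_integral_bounds:
  assumes "is_profile L \<omega>" "L \<ge> 0"
  shows "integral {-L..L} \<omega> \<in> {0..2 * L}"
proof -
  have int: "\<omega> integrable_on {-L..L}" and bnd: "\<And>x. x \<in> {-L..L} \<Longrightarrow> 0 \<le> \<omega> x \<and> \<omega> x \<le> 1"
    using assms unfolding is_profile_def by auto
  have "integral {-L..L} \<omega> \<le> integral {-L..L} (\<lambda>x. 1::real)"
    using int bnd by (intro integral_le) auto
  moreover have "0 \<le> integral {-L..L} \<omega>"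
    using int bnd by (intro integral_nonneg) auto
  ultimately show ?thesis
    using assms by simp
qed

lemma has_integral_step:
  fixes L t :: real
  assumes "-L \<le> t" "t \<le> L"
  shows "((\<lambda>x. if x \<le> t then \<alpha> else \<beta>) has_integral \<alpha> * (t + L) + \<beta> * (L - t)) {-L..L}"
proof -
  have "((\<lambda>x. if x \<in> {-L..t} then \<alpha> - \<beta> else 0) has_integral (t + L) * (\<alpha> - \<beta>)) {-L..L}"
    using has_integral_restrict[of "{-L..t}" "{-L..L}" "\<lambda>x. \<alpha> - \<beta>"]
      has_integral_const_real[of "\<alpha> - \<beta>" "-L" t] assms
    by simp
  moreover have "((\<lambda>x. \<beta>) has_integral 2 * L * \<beta>) {-L..L}"
    using has_integral_const_real[of \<beta> "-L" L] assms by simp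
  ultimately have sum: "((\<lambda>x. \<beta> + (if x \<in> {-L..t} then \<alpha> - \<beta> else 0)) has_integral
      2 * L * \<beta> + (t + L) * (\<alpha> - \<beta>)) {-L..L}"
    by (rule has_integral_add[rotated])
  have "2 * L * \<beta> + (t + L) * (\<alpha> - \<beta>) = \<alpha> * (t + L) + \<beta> * (L - t)"
    by (simp add: algebra_simps)
  then show ?thesis
    using has_integral_spike[OF negligible_empty _ sum] by auto
qed

lemma has_integral_step_strict:
  fixes L t :: real
  assumes "-L \<le> t" "t \<le> L"
  shows "((\<lambda>x. if x < t then \<alpha> else \<beta>) has_integral \<alpha> * (t + L) + \<beta> * (L - t)) {-L..L}"
  by (rule has_integral_spike[OF negligible_sing[of t] _ has_integral_step[OF assms]]) auto

lemma profile_integral_ge: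
  assumes "is_profile L \<omega>" "-L \<le> t" "t \<le> L" "\<forall>x\<in>{-L..t}. \<omega> x = 1"
  shows "t + L \<le> integral {-L..L} \<omega>"
proof -
  have step: "((\<lambda>x. if x \<le> t then 1 else 0) has_integral t + L) {-L..L}"
    using has_integral_step[OF assms(2,3), of 1 0] by (simp only: mult_1 mult_zero_left add_0_right)
  have "integral {-L..L} (\<lambda>x. if x \<le> t then 1 else 0) \<le> integral {-L..L} \<omega>"
  proof (rule integral_le)
    show "(\<lambda>x. if x \<le> t then 1 else 0 :: real) integrable_on {-L..L}"
      using step by (rule has_integral_integrable)
    show "\<omega> integrable_on {-L..L}"
      using assms(1) unfolding is_profile_def by blast
    show "(if x \<le> t then 1 else 0 :: real) \<le> \<omega> x" if "x \<in> {-L..L}" for x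
      using assms that unfolding is_profile_def by auto
  qed
  with step show ?thesis
    by (simp add: integral_unique)
qed

lemma is_NE_imp_profile:
  "is_NE L lam kl kq kp d x1 k1 mu1 s1 p1 x2 k2 mu2 s2 p2 \<omega> \<Longrightarrow> is_profile L \<omega>"
  unfolding is_NE_def by simp

lemma strict_mono_on_unique_root:
  fixes G :: "real \<Rightarrow> real"
  assumes "a \<le> b" "continuous_on {a..b} G" "strict_mono_on {a..b} G" "G a \<le> c" "c \<le> G b"
  shows "\<exists>!x. x \<in> {a..b} \<and> G x = c"
proof -
  obtain x where "a \<le> x" "x \<le> b" "G x = c"
    using IVT'[of G a c b] assms by blast
  moreover have "inj_on G {a..b}"
    using assms(3) by (rule strict_mono_on_imp_inj_on)
  ultimately show ?thesis
    by (metis atLeastAtMost_iff inj_onD)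
qed

lemma ex1_unit_interval_reflect:
  assumes "\<exists>!w. w \<in> {0..1} \<and> P (1 - w)"
  shows "\<exists>!w::real. w \<in> {0..1} \<and> P w"
proof -
  obtain w where w: "w \<in> {0..1}" "P (1 - w)" and unique: "\<And>v. v \<in> {0..1} \<Longrightarrow> P (1 - v) \<Longrightarrow> v = w"
    using assms by blast
  show ?thesis
  proof (rule ex1I[of _ "1 - w"])
    show "1 - w \<in> {0..1} \<and> P (1 - w)"
      using w by auto
    fix v assume "v \<in> {0..1} \<and> P v"
    then have "1 - v = w"
      using unique[of "1 - v"] by auto
    then show "v = 1 - w"
      by simp
  qed
qed

section \<open>Mirror symmetry of the game\<close>

lemma integrable_reflect_symmetric:
  fixes f :: "real \<Rightarrow> real"
  shows "(\<lambda>x. f (- x)) integrable_on {-L..L} \<longleftrightarrow> f integrable_on {-L..L}"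
  using Henstock_Kurzweil_Integration.integrable_reflect_real[where a = "-L" and b = L and f = f] by (simp only: minus_minus)

lemma integral_reflect_symmetric:
  fixes f :: "real \<Rightarrow> real"
  shows "integral {-L..L} (\<lambda>x. f (- x)) = integral {-L..L} f"
  using Henstock_Kurzweil_Integration.integral_reflect_real[where a = "-L" and b = L and f = f] by (simp only: minus_minus)

lemma is_profile_reflect:
  assumes "is_profile L \<omega>"
  shows "is_profile L (\<lambda>x. 1 - \<omega> (- x))"
proof -
  have "(\<lambda>x. 1 - \<omega> (- x)) integrable_on {-L..L}"
    using assms unfolding is_profile_def
    by (intro integrable_diff) (auto simp: integrable_reflect_symmetric)
  then show ?thesis
    using assms unfolding is_profile_def by auto
qed

lemma integral_reflect_profile:
  assumes "is_profile L \<omega>" "L \<ge> 0"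
  shows "integral {-L..L} (\<lambda>x. 1 - \<omega> (- x)) = 2 * L - integral {-L..L} \<omega>"
proof -
  have "(\<lambda>x. \<omega> (- x)) integrable_on {-L..L}"
    using assms unfolding is_profile_def by (simp add: integrable_reflect_symmetric)
  then have "integral {-L..L} (\<lambda>x. 1 - \<omega> (- x)) = integral {-L..L} (\<lambda>x. 1) - integral {-L..L} (\<lambda>x. \<omega> (- x))"
    by (intro integral_diff) auto
  then show ?thesis
    using assms by (simp add: integral_reflect_symmetric)
qed

lemma payoff_reflect:
  "payoff kl kq kp d (- xi) q pr x = payoff kl kq kp d xi q pr (- x)"
proof -
  have "\<bar>x - - xi\<bar> = \<bar>- x - xi\<bar>"
    by arith
  then show ?thesis
    unfolding payoff_def by simp
qed

lemma is_NE_reflect: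
  assumes "L \<ge> 0" "is_NE L lam kl kq kp d x1 k1 mu1 s1 p1 x2 k2 mu2 s2 p2 \<omega>"
  shows "is_NE L lam kl kq kp d (- x2) k2 mu2 s2 p2 (- x1) k1 mu1 s1 p1 (\<lambda>x. 1 - \<omega> (- x))"
proof -
  have prof: "is_profile L \<omega>"
    using assms(2) unfolding is_NE_def by simp
  define a where "a = integral {-L..L} \<omega>"
  define U1 where "U1 = payoff kl kq kp d x1 (waitq_ext k1 mu1 s1 lam a) p1"
  define U2 where "U2 = payoff kl kq kp d x2 (waitq_ext k2 mu2 s2 lam (2 * L - a)) p2"
  have best: "max (U1 x) (U2 x) \<le> ereal (\<omega> x) * U1 x + ereal (1 - \<omega> x) * U2 x"
    if "x \<in> {-L..L}" for x
    using assms(2) that unfolding is_NE_def Let_def U1_def U2_def a_def by simp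
  have "max (U2 (- y)) (U1 (- y)) \<le> ereal (1 - \<omega> (- y)) * U2 (- y) + ereal (1 - (1 - \<omega> (- y))) * U1 (- y)"
    if "y \<in> {-L..L}" for y
  proof -
    have "- y \<in> {-L..L}"
      using that by auto
    from best[OF this] show ?thesis
      by (simp only: max.commute add.commute diff_diff_eq2 add_diff_cancel_left')
  qed
  moreover have "payoff kl kq kp d (- x2) (waitq_ext k2 mu2 s2 lam (2 * L - a)) p2 y = U2 (- y)" for y
    unfolding U2_def payoff_reflect ..
  moreover have "payoff kl kq kp d (- x1) (waitq_ext k1 mu1 s1 lam (2 * L - (2 * L - a))) p1 y = U1 (- y)" for y
    unfolding U1_def payoff_reflect by simp
  ultimately show ?thesis
    using is_profile_reflect[OF prof]
    unfolding is_NE_def Let_def integral_reflect_profile[OF prof assms(1)] a_def[symmetric]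
    by presburger
qed

lemma is_NE_reflect_iff:
  assumes "L \<ge> 0"
  shows "is_NE L lam kl kq kp d x1 k1 mu1 s1 p1 x2 k2 mu2 s2 p2 \<omega> \<longleftrightarrow>
    is_NE L lam kl kq kp d (- x2) k2 mu2 s2 p2 (- x1) k1 mu1 s1 p1 (\<lambda>x. 1 - \<omega> (- x))"
proof
  assume "is_NE L lam kl kq kp d (- x2) k2 mu2 s2 p2 (- x1) k1 mu1 s1 p1 (\<lambda>x. 1 - \<omega> (- x))"
  from is_NE_reflect[OF assms this]
  show "is_NE L lam kl kq kp d x1 k1 mu1 s1 p1 x2 k2 mu2 s2 p2 \<omega>"
    by simp
qed (rule is_NE_reflect[OF assms])

section \<open>The full-full scenario\<close>

text \<open>The FULL-FULL scenario: each station alone could serve the whole road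
  (\<open>k\<^sub>i \<mu>\<^sub>i > 2L\<lambda>\<close>), so waiting times stay finite for every profile. Only the product \<open>k\<^sub>p d\<close> matters.\<close>

locale pssg_full =
  fixes L lam kl kq kp d x1 x2 mu1 mu2 s1 s2 p1 p2 :: real and k1 k2 :: nat
  assumes L_pos: "L > 0" and x1_gt: "-L < x1" and x1_less_x2: "x1 < x2" and x2_less: "x2 < L"
    and k1: "k1 \<ge> 1" and k2: "k2 \<ge> 1" and mu1: "mu1 > 0" and mu2: "mu2 > 0"
    and s1: "s1 \<ge> 0" and s2: "s2 \<ge> 0" and lam: "lam > 0" and kl: "kl > 0" and kq: "kq > 0"
    and kpd: "kp * d > 0"
    and full1: "2 * L * lam < real k1 * mu1" and full2: "2 * L * lam < real k2 * mu2"
begin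

abbreviation "q1 \<equiv> waitq k1 mu1 s1 lam"
abbreviation "q2 \<equiv> waitq k2 mu2 s2 lam"
abbreviation "NE \<equiv> is_NE L lam kl kq kp d x1 k1 mu1 s1 p1 x2 k2 mu2 s2 p2"

definition cost_gap :: "real \<Rightarrow> real" where
  "cost_gap a = kq * (q1 a - q2 (2 * L - a)) + kp * d * (p1 - p2)"

abbreviation travel_gain :: "real \<Rightarrow> real" where
  "travel_gain x \<equiv> kl * (\<bar>x - x2\<bar> - \<bar>x - x1\<bar>)"

lemma waitq_strict_mono_on_loads:
  "strict_mono_on {0..2 * L} q1" "strict_mono_on {0..2 * L} q2"
  using monotone_on_subset[OF waitq_strict_mono_on[OF k1 mu1 lam s1] interval_below_capacity[OF lam full1]]
    monotone_on_subset[OF waitq_strict_mono_on[OF k2 mu2 lam s2] interval_below_capacity[OF lam full2]]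
  by auto

lemma cost_gap_strict_mono: "strict_mono_on {0..2 * L} cost_gap"
proof (rule strict_mono_onI)
  fix a b assume ab: "a \<in> {0..2 * L}" "b \<in> {0..2 * L}" "a < b"
  then have "q1 a < q1 b" "q2 (2 * L - b) < q2 (2 * L - a)"
    using strict_mono_onD[OF waitq_strict_mono_on_loads(1)] strict_mono_onD[OF waitq_strict_mono_on_loads(2)]
    by auto
  then show "cost_gap a < cost_gap b"
    unfolding cost_gap_def using kq by simp
qed

lemma continuous_on_cost_gap: "continuous_on {0..2 * L} cost_gap"
proof -
  have q1: "continuous_on {0..2 * L} q1" and q2: "continuous_on {0..2 * L} q2"
    using continuous_on_subset[OF continuous_on_waitq[OF k1 mu1 lam] interval_below_capacity[OF lam full1]]
      continuous_on_subset[OF continuous_on_waitq[OF k2 mu2 lam] interval_below_capacity[OF lam full2]]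
    by auto
  have "continuous_on {0..2 * L} (\<lambda>a. q2 (2 * L - a))"
    by (rule continuous_on_compose2[OF q2]) (auto intro: continuous_intros)
  with q1 show ?thesis
    unfolding cost_gap_def by (intro continuous_intros)
qed

lemma NE_iff_threshold:
  assumes prof: "is_profile L \<omega>"
  shows "NE \<omega> \<longleftrightarrow> (\<forall>x\<in>{-L..L}.
    (cost_gap (integral {-L..L} \<omega>) < travel_gain x \<longrightarrow> \<omega> x = 1) \<and>
    (travel_gain x < cost_gap (integral {-L..L} \<omega>) \<longrightarrow> \<omega> x = 0))"
proof -
  define a where "a = integral {-L..L} \<omega>"
  have a: "a \<in> {0..2 * L}" "2 * L - a \<in> {0..2 * L}"
    using profile_integral_bounds[OF prof] L_pos unfolding a_def by auto
  have ext: "waitq_ext k1 mu1 s1 lam a = ereal (q1 a)"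
    "waitq_ext k2 mu2 s2 lam (2 * L - a) = ereal (q2 (2 * L - a))"
    using subsetD[OF interval_below_capacity[OF lam full1] a(1)]
      subsetD[OF interval_below_capacity[OF lam full2] a(2)]
    by (auto intro!: waitq_ext_below_capacity)
  define u1 where "u1 x = - (kl * \<bar>x - x1\<bar>) - kq * q1 a - kp * d * p1" for x
  define u2 where "u2 x = - (kl * \<bar>x - x2\<bar>) - kq * q2 (2 * L - a) - kp * d * p2" for x
  have gain: "u1 x - u2 x = travel_gain x - cost_gap a" for x
    unfolding u1_def u2_def cost_gap_def by (simp add: algebra_simps)
  have bounds: "0 \<le> \<omega> x \<and> \<omega> x \<le> 1" if "x \<in> {-L..L}" for x
    using prof that unfolding is_profile_def by auto
  have "NE \<omega> \<longleftrightarrow> (\<forall>x\<in>{-L..L}.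
      max (ereal (u1 x)) (ereal (u2 x)) \<le> ereal (\<omega> x) * ereal (u1 x) + ereal (1 - \<omega> x) * ereal (u2 x))"
    using prof unfolding is_NE_def Let_def a_def[symmetric] ext payoff_ereal u1_def u2_def by blast
  also have "\<dots> \<longleftrightarrow> (\<forall>x\<in>{-L..L}. (u2 x < u1 x \<longrightarrow> \<omega> x = 1) \<and> (u1 x < u2 x \<longrightarrow> \<omega> x = 0))"
    using bounds by (intro ball_cong refl mixture_ge_max_iff) auto
  also have "\<dots> \<longleftrightarrow> (\<forall>x\<in>{-L..L}.
      (cost_gap a < travel_gain x \<longrightarrow> \<omega> x = 1) \<and> (travel_gain x < cost_gap a \<longrightarrow> \<omega> x = 0))"
  proof -
    have "u2 x < u1 x \<longleftrightarrow> cost_gap a < travel_gain x" "u1 x < u2 x \<longleftrightarrow> travel_gain x < cost_gap a" for x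
      using gain[of x] by linarith+
    then show ?thesis
      by simp
  qed
  finally show ?thesis
    unfolding a_def .
qed

lemma travel_gain_le: "travel_gain x \<le> kl * (x2 - x1)"
  using kl x1_less_x2 by (intro mult_left_mono) (auto simp: abs_if)

lemma travel_gain_left: "x \<le> x1 \<Longrightarrow> travel_gain x = kl * (x2 - x1)"
  using x1_less_x2 by (simp add: abs_if)

lemma travel_gain_less: "x1 < x \<Longrightarrow> travel_gain x < kl * (x2 - x1)"
  using kl x1_less_x2 by (intro mult_strict_left_mono) (auto simp: abs_if)

lemma right_root_unique:
  assumes "cost_gap 0 < kl * (x2 - x1)" "kl * (x2 - x1) \<le> cost_gap (x1 + L)"
  shows "\<exists>!w. w \<in> {0..1} \<and> cost_gap ((x1 + L) * w) = kl * (x2 - x1)"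
proof (rule strict_mono_on_unique_root)
  have load: "(x1 + L) * w \<in> {0..2 * L}" if "w \<in> {0..1}" for w
  proof -
    have "(x1 + L) * w \<le> x1 + L"
      using that x1_gt by (intro mult_left_le) auto
    moreover have "0 \<le> (x1 + L) * w"
      using that x1_gt by simp
    ultimately show ?thesis
      using x1_less_x2 x2_less by simp
  qed
  show "continuous_on {0..1} (\<lambda>w. cost_gap ((x1 + L) * w))"
    using load by (intro continuous_on_compose2[OF continuous_on_cost_gap] continuous_intros) auto
  show "strict_mono_on {0..1} (\<lambda>w. cost_gap ((x1 + L) * w))"
    using load x1_gt by (intro strict_mono_onI strict_mono_onD[OF cost_gap_strict_mono]) auto
qed (use assms in auto)

lemma NE_right_candidate:
  assumes w: "w \<in> {0..1}" and root: "cost_gap ((x1 + L) * w) = kl * (x2 - x1)"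
  shows "NE (\<lambda>x. if x < x1 then w else 0)"
proof -
  have "((\<lambda>x. if x < x1 then w else 0) has_integral w * (x1 + L) + 0 * (L - x1)) {-L..L}"
    using x1_gt x1_less_x2 x2_less by (intro has_integral_step_strict) auto
  then have prof: "is_profile L (\<lambda>x. if x < x1 then w else 0)"
    and int: "integral {-L..L} (\<lambda>x. if x < x1 then w else 0) = (x1 + L) * w"
    using w unfolding is_profile_def by (auto simp: integral_unique has_integral_integrable mult.commute)
  show ?thesis
    unfolding NE_iff_threshold[OF prof] int root
    using travel_gain_le travel_gain_left by (smt (verit))
qed

lemma NE_best_response:
  assumes "NE \<omega>" "x \<in> {-L..L}"
  shows "(cost_gap (integral {-L..L} \<omega>) < travel_gain x \<longrightarrow> \<omega> x = 1) \<and>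
    (travel_gain x < cost_gap (integral {-L..L} \<omega>) \<longrightarrow> \<omega> x = 0)"
  using assms NE_iff_threshold[OF is_NE_imp_profile[OF assms(1)]] by blast

lemma NE_load_ge_if_cost_gap_less:
  assumes "NE \<omega>" "cost_gap (integral {-L..L} \<omega>) < kl * (x2 - x1)"
  shows "x1 + L \<le> integral {-L..L} \<omega>"
proof (rule profile_integral_ge[OF is_NE_imp_profile[OF assms(1)]])
  show "\<forall>x\<in>{-L..x1}. \<omega> x = 1"
    using NE_best_response[OF assms(1)] assms(2) travel_gain_left x1_less_x2 x2_less by auto
qed (use x1_gt x1_less_x2 x2_less in auto)

lemma NE_load_zero_if_cost_gap_greater:
  assumes "NE \<omega>" "kl * (x2 - x1) < cost_gap (integral {-L..L} \<omega>)"
  shows "integral {-L..L} \<omega> = 0"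
proof -
  have "\<omega> x = 0" if "x \<in> {-L..L}" for x
    using NE_best_response[OF assms(1) that] assms(2) travel_gain_le[of x] by linarith
  then have "integral {-L..L} \<omega> = integral {-L..L} (\<lambda>x. 0::real)"
    by (intro integral_cong) auto
  then show ?thesis
    by simp
qed

lemma NE_right_unique:
  assumes w: "w \<in> {0..1}" and root: "cost_gap ((x1 + L) * w) = kl * (x2 - x1)" and "NE \<omega>"
  shows "integral {-L..L} \<omega> = (x1 + L) * w \<and> (\<forall>x\<in>{x1<..L}. \<omega> x = 0)"
proof -
  define a where "a = integral {-L..L} \<omega>"
  have a: "a \<in> {0..2 * L}"
    using profile_integral_bounds[OF is_NE_imp_profile[OF \<open>NE \<omega>\<close>]] L_pos unfolding a_def by auto
  have A: "0 \<le> (x1 + L) * w" "(x1 + L) * w \<le> x1 + L"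
    using w x1_gt mult_left_le[of w "x1 + L"] by auto
  then have "(x1 + L) * w \<in> {0..2 * L}"
    using x1_less_x2 x2_less by simp
  then have "a = (x1 + L) * w"
    using strict_mono_onD[OF cost_gap_strict_mono, of a "(x1 + L) * w"]
      strict_mono_onD[OF cost_gap_strict_mono, of "(x1 + L) * w" a]
      NE_load_ge_if_cost_gap_less[OF \<open>NE \<omega>\<close>] NE_load_zero_if_cost_gap_greater[OF \<open>NE \<omega>\<close>]
      a A root unfolding a_def[symmetric]
    by (cases a "(x1 + L) * w" rule: linorder_cases) auto
  moreover have "\<omega> x = 0" if "x \<in> {x1<..L}" for x
    using NE_best_response[OF \<open>NE \<omega>\<close>, of x] travel_gain_less[of x] that x1_gt root \<open>a = (x1 + L) * w\<close>
    unfolding a_def by auto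
  ultimately show ?thesis
    unfolding a_def by blast
qed

lemma right_regime:
  assumes "cost_gap 0 < kl * (x2 - x1)" "kl * (x2 - x1) \<le> cost_gap (x1 + L)"
  shows "(\<exists>!w. w \<in> {0..1} \<and> cost_gap ((x1 + L) * w) = kl * (x2 - x1)) \<and>
    (\<forall>w. w \<in> {0..1} \<and> cost_gap ((x1 + L) * w) = kl * (x2 - x1) \<longrightarrow>
       NE (\<lambda>x. if x < x1 then w else 0) \<and>
       (\<forall>\<omega>. NE \<omega> \<longrightarrow> integral {-L..L} \<omega> = (x1 + L) * w \<and> (\<forall>x\<in>{x1<..L}. \<omega> x = 0)))"
  using right_root_unique[OF assms] NE_right_candidate NE_right_unique by blast

lemma pssg_full_mirror: "pssg_full L lam kl kq kp d (- x2) (- x1) mu2 mu1 s2 s1 k2 k1"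
  using L_pos x1_gt x1_less_x2 x2_less k1 k2 mu1 mu2 s1 s2 lam kl kq kpd full1 full2
  by unfold_locales auto

text \<open>Reflecting the road and swapping the stations turns the left regime into the right regime of
  the mirrored game; the root \<open>v\<close> of the mirrored game corresponds to the root \<open>1 - v\<close> here.\<close>

lemma mirror_right_regime:
  assumes "cost_gap (x2 + L) \<le> - (kl * (x2 - x1))" "- (kl * (x2 - x1)) < cost_gap (2 * L)"
  shows "(\<exists>!v. v \<in> {0..1} \<and> cost_gap (x2 + L + (L - x2) * (1 - v)) = - (kl * (x2 - x1))) \<and>
    (\<forall>v. v \<in> {0..1} \<and> cost_gap (x2 + L + (L - x2) * (1 - v)) = - (kl * (x2 - x1)) \<longrightarrow>
       is_NE L lam kl kq kp d (- x2) k2 mu2 s2 p2 (- x1) k1 mu1 s1 p1 (\<lambda>x. if x < - x2 then v else 0) \<and>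
       (\<forall>\<omega>. is_NE L lam kl kq kp d (- x2) k2 mu2 s2 p2 (- x1) k1 mu1 s1 p1 \<omega> \<longrightarrow>
          integral {-L..L} \<omega> = (- x2 + L) * v \<and> (\<forall>x\<in>{- x2<..L}. \<omega> x = 0)))"
proof -
  interpret mirror: pssg_full L lam kl kq kp d "- x2" "- x1" mu2 mu1 s2 s1 p2 p1 k2 k1
    by (rule pssg_full_mirror)
  have mirror_gap: "mirror.cost_gap a = - cost_gap (2 * L - a)" for a
    unfolding mirror.cost_gap_def cost_gap_def by (simp add: algebra_simps)
  have mirror_gain: "kl * (- x1 - - x2) = kl * (x2 - x1)"
    by simp
  have mirror_root: "mirror.cost_gap ((- x2 + L) * v) = kl * (- x1 - - x2) \<longleftrightarrow>
      cost_gap (x2 + L + (L - x2) * (1 - v)) = - (kl * (x2 - x1))" for v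
  proof -
    have "2 * L - (- x2 + L) * v = x2 + L + (L - x2) * (1 - v)"
      by (simp add: algebra_simps)
    then show ?thesis
      unfolding mirror_gap mirror_gain by (smt (verit))
  qed
  have "2 * L - 0 = 2 * L" "2 * L - (- x2 + L) = x2 + L"
    by simp_all
  then have "mirror.cost_gap 0 < kl * (- x1 - - x2)" "kl * (- x1 - - x2) \<le> mirror.cost_gap (- x2 + L)"
    using assms unfolding mirror_gap mirror_gain by (smt (verit))+
  from mirror.right_regime[OF this] show ?thesis
    unfolding mirror_root .
qed

lemma left_regime:
  assumes "cost_gap (x2 + L) \<le> - (kl * (x2 - x1))" "- (kl * (x2 - x1)) < cost_gap (2 * L)"
  shows "(\<exists>!w. w \<in> {0..1} \<and> cost_gap (x2 + L + (L - x2) * w) = - (kl * (x2 - x1))) \<and>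
    (\<forall>w. w \<in> {0..1} \<and> cost_gap (x2 + L + (L - x2) * w) = - (kl * (x2 - x1)) \<longrightarrow>
       NE (\<lambda>x. if x \<le> x2 then 1 else w) \<and>
       (\<forall>\<omega>. NE \<omega> \<longrightarrow> integral {-L..L} \<omega> = x2 + L + (L - x2) * w \<and> (\<forall>x\<in>{-L..<x2}. \<omega> x = 1)))"
    (is "?root \<and> (\<forall>w. ?P w \<longrightarrow> ?equilibrium w)")
proof -
  note mirror = mirror_right_regime[OF assms]
  have ?root
    by (rule ex1_unit_interval_reflect[where P = "\<lambda>w. cost_gap (x2 + L + (L - x2) * w) = - (kl * (x2 - x1))"])
      (rule conjunct1[OF mirror])
  moreover have "?equilibrium w" if "?P w" for w
  proof -
    have "1 - w \<in> {0..1} \<and> cost_gap (x2 + L + (L - x2) * (1 - (1 - w))) = - (kl * (x2 - x1))"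
      using that by simp
    with mirror have mirror_eq:
      "is_NE L lam kl kq kp d (- x2) k2 mu2 s2 p2 (- x1) k1 mu1 s1 p1 (\<lambda>x. if x < - x2 then 1 - w else 0)"
      "\<And>\<omega>. is_NE L lam kl kq kp d (- x2) k2 mu2 s2 p2 (- x1) k1 mu1 s1 p1 \<omega> \<Longrightarrow>
          integral {-L..L} \<omega> = (- x2 + L) * (1 - w) \<and> (\<forall>x\<in>{- x2<..L}. \<omega> x = 0)"
      by blast+
    have "(\<lambda>x. 1 - (if - x \<le> x2 then 1 else w)) = (\<lambda>x. if x < - x2 then 1 - w else 0)"
      by (auto simp: fun_eq_iff)
    then have "NE (\<lambda>x. if x \<le> x2 then 1 else w)"
      using mirror_eq(1) by (subst is_NE_reflect_iff) (use L_pos in auto)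
    moreover have "integral {-L..L} \<omega> = x2 + L + (L - x2) * w \<and> (\<forall>x\<in>{-L..<x2}. \<omega> x = 1)"
      if "NE \<omega>" for \<omega>
    proof -
      have "2 * L - integral {-L..L} \<omega> = (- x2 + L) * (1 - w)"
        and right: "\<forall>x\<in>{- x2<..L}. 1 - \<omega> (- x) = 0"
        using mirror_eq(2)[OF is_NE_reflect[OF _ that]] integral_reflect_profile[OF is_NE_imp_profile[OF that]] L_pos
        by auto
      moreover have "x2 + L + (L - x2) * w = 2 * L - (- x2 + L) * (1 - w)"
        by (simp add: algebra_simps)
      moreover have "\<omega> x = 1" if "x \<in> {-L..<x2}" for x
        using bspec[OF right, of "- x"] that by auto
      ultimately show ?thesis
        by auto
    qed
    ultimately show ?thesis
      by blast
  qed
  ultimately show ?thesis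
    by blast
qed

lemma right_root_iff:
  "kq * (q1 ((x1 + L) * w) - q2 (L - x1 + (x1 + L) * (1 - w))) + kp * d * (p1 - p2) + kl * (x1 - x2) = 0
    \<longleftrightarrow> cost_gap ((x1 + L) * w) = kl * (x2 - x1)"
proof -
  have "L - x1 + (x1 + L) * (1 - w) = 2 * L - (x1 + L) * w"
    by (simp add: algebra_simps)
  then show ?thesis
    unfolding cost_gap_def by (simp only:) (auto simp: algebra_simps)
qed

lemma left_root_iff:
  "kq * (q2 ((L - x2) * (1 - w)) - q1 (x2 + L + (L - x2) * w)) + kp * d * (p2 - p1) + kl * (x1 - x2) = 0
    \<longleftrightarrow> cost_gap (x2 + L + (L - x2) * w) = - (kl * (x2 - x1))"
proof -
  have "(L - x2) * (1 - w) = 2 * L - (x2 + L + (L - x2) * w)"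
    by (simp add: algebra_simps)
  then show ?thesis
    unfolding cost_gap_def by (simp only:) (auto simp: algebra_simps)
qed

lemma right_regime_condition:
  assumes "(kq * (q2 (L - x1) - q1 (x1 + L)) + kl * (x2 - x1)) / (kp * d) \<le> p1 - p2"
    and "p1 - p2 < (kq * q2 (2 * L) + kl * (x2 - x1)) / (kp * d)"
  shows "cost_gap 0 < kl * (x2 - x1)" "kl * (x2 - x1) \<le> cost_gap (x1 + L)"
proof -
  have "kq * (q2 (L - x1) - q1 (x1 + L)) + kl * (x2 - x1) \<le> kp * d * (p1 - p2)"
    "kp * d * (p1 - p2) < kq * q2 (2 * L) + kl * (x2 - x1)"
    using assms kpd by (simp_all add: pos_divide_le_eq pos_less_divide_eq mult.commute)
  moreover have "2 * L - (x1 + L) = L - x1"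
    by simp
  ultimately show "cost_gap 0 < kl * (x2 - x1)" "kl * (x2 - x1) \<le> cost_gap (x1 + L)"
    unfolding cost_gap_def by (simp_all add: waitq_zero algebra_simps)
qed

lemma left_regime_condition:
  assumes "- (kq * q1 (2 * L) + kl * (x2 - x1)) / (kp * d) < p1 - p2"
    and "p1 - p2 \<le> - (kq * (q1 (L + x2) - q2 (L - x2)) + kl * (x2 - x1)) / (kp * d)"
  shows "cost_gap (x2 + L) \<le> - (kl * (x2 - x1))" "- (kl * (x2 - x1)) < cost_gap (2 * L)"
proof -
  have "- (kq * q1 (2 * L) + kl * (x2 - x1)) < kp * d * (p1 - p2)"
    "kp * d * (p1 - p2) \<le> - (kq * (q1 (L + x2) - q2 (L - x2)) + kl * (x2 - x1))"
    using assms kpd by (simp_all add: pos_divide_less_eq pos_le_divide_eq mult.commute)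
  moreover have "2 * L - (x2 + L) = L - x2"
    by simp
  ultimately show "cost_gap (x2 + L) \<le> - (kl * (x2 - x1))" "- (kl * (x2 - x1)) < cost_gap (2 * L)"
    unfolding cost_gap_def by (simp_all add: waitq_zero algebra_simps add.commute[of x2 L])
qed

end

theorem theorem2:
  fixes L lam kl kq kp d x1 x2 mu1 mu2 s1 s2 p1 p2 pmin pmax :: real
    and k1 k2 :: nat
  assumes "L > 0" and "-L < x1" and "x1 < x2" and "x2 < L"
    and "k1 \<ge> 1" and "k2 \<ge> 1" and "mu1 > 0" and "mu2 > 0"
    and "s1 \<ge> 0" and "s2 \<ge> 0"  (* service-time variances sigma_i^2 *)
    and "lam > 0" and "kl > 0" and "kq > 0" and "kp > 0" and "d > 0"
    and "p1 \<in> {pmin..pmax}" and "p2 \<in> {pmin..pmax}"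
    and full1: "real k1 * mu1 > 2 * L * lam" and full2: "real k2 * mu2 > 2 * L * lam"
  shows
   "(let q1 = waitq k1 mu1 s1 lam; q2 = waitq k2 mu2 s2 lam;
         thL1 = - (kq * (q1 (L + x2) - q2 (L - x2)) + kl * (x2 - x1)) / (kp * d);
         thR1 = (kq * (q2 (L - x1) - q1 (x1 + L)) + kl * (x2 - x1)) / (kp * d);
         thL2 = - (kq * q1 (2 * L) + kl * (x2 - x1)) / (kp * d);
         thR2 = (kq * q2 (2 * L) + kl * (x2 - x1)) / (kp * d);
         F1 = (\<lambda>w. kq * (q1 ((x1 + L) * w) - q2 (L - x1 + (x1 + L) * (1 - w)))
                   + kp * d * (p1 - p2) + kl * (x1 - x2));
         F2 = (\<lambda>w. kq * (q2 ((L - x2) * (1 - w)) - q1 (x2 + L + (L - x2) * w))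
                   + kp * d * (p2 - p1) + kl * (x1 - x2));
         NE = is_NE L lam kl kq kp d x1 k1 mu1 s1 p1 x2 k2 mu2 s2 p2
     in
     (thR1 \<le> p1 - p2 \<and> p1 - p2 < thR2 \<longrightarrow>
        (\<exists>!w. w \<in> {0..1} \<and> F1 w = 0) \<and>
        (\<forall>w. w \<in> {0..1} \<and> F1 w = 0 \<longrightarrow>
            NE (\<lambda>x. if x < x1 then w else 0) \<and>
            (\<forall>\<omega>. NE \<omega> \<longrightarrow>
                integral {-L..L} \<omega> = (x1 + L) * w \<and> (\<forall>x\<in>{x1<..L}. \<omega> x = 0))))
     \<and>
     (thL2 < p1 - p2 \<and> p1 - p2 \<le> thL1 \<longrightarrow>
        (\<exists>!w. w \<in> {0..1} \<and> F2 w = 0) \<and>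
        (\<forall>w. w \<in> {0..1} \<and> F2 w = 0 \<longrightarrow>
            NE (\<lambda>x. if x \<le> x2 then 1 else w) \<and>
            (\<forall>\<omega>. NE \<omega> \<longrightarrow>
                integral {-L..L} \<omega> = (x2 + L) + (L - x2) * w \<and> (\<forall>x\<in>{-L..<x2}. \<omega> x = 1)))))"
proof -
  interpret pssg_full L lam kl kq kp d x1 x2 mu1 mu2 s1 s2 p1 p2 k1 k2
    using assms by unfold_locales auto
  show ?thesis
    unfolding Let_def right_root_iff left_root_iff
    by (intro conjI[OF impI impI]; elim conjE)
      (rule right_regime[OF right_regime_condition] left_regime[OF left_regime_condition]; assumption)+
qed

end
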